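(* Let $A,B,l$ be positive integers and let $\mathcal A\subset\mathbb R^2$ be a set such that $a+b=l-1$ for all $(a,b)\in\mathcal A$. Then there exist $\lambda_1,\lambda_2\in\mathbb R$ with \[a\lambda_1+b\lambda_2\ge1\ \text{ for all }(a,b)\in\mathcal A\qquad\text{and}\qquad \lambda_1A+\lambda_2B<0\] if and only if either \[\inf_{(a,b)\in\mathcal A}a>\frac{A(l-1)}{A+B}\qquad\text{or}\qquad\inf_{(a,b)\in\mathcal A}b>\frac{B(l-1)}{A+B}.\] *)

theory Defs
  imports Complex_Main "HOL-Library.Extended_Real"
begin

end

theory Submission
  imports Defs
begin

text \<open>On the line \<open>a + b = L\<close> one has \<open>a \<lambda>\<^sub>1 + b \<lambda>\<^sub>2 = d a + L \<lambda>\<^sub>2\<close> with \<open>d = \<lambda>\<^sub>1 - \<lambda>\<^sub>2\<close>,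
  and \<open>\<lambda>\<^sub>1 A + \<lambda>\<^sub>2 B < 0\<close> says exactly \<open>\<lambda>\<^sub>2 < -d A / (A + B)\<close>. Hence a solution exists iff
  some \<open>d\<close> satisfies \<open>d (a - c) \<ge> 1\<close> on all of the set, where \<open>c = A L / (A + B)\<close>; that is,
  iff the first coordinates stay uniformly above \<open>c\<close> or uniformly below it, and on the
  line the latter means that the second coordinates stay uniformly above \<open>L - c = B L / (A + B)\<close>.\<close>

lemma ereal_less_INF_iff:
  "ereal c < (INF x\<in>X. ereal (f x)) \<longleftrightarrow> (\<exists>m>c. \<forall>x\<in>X. m \<le> f x)"
proof
  assume "ereal c < (INF x\<in>X. ereal (f x))"
  then obtain m where "ereal c < ereal m" and m: "ereal m < (INF x\<in>X. ereal (f x))"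
    using ereal_dense2 by blast
  moreover have "m \<le> f x" if "x \<in> X" for x
    using order.strict_trans2[OF m INF_lower[OF that]] by (simp add: less_imp_le)
  ultimately show "\<exists>m>c. \<forall>x\<in>X. m \<le> f x" by auto
next
  assume "\<exists>m>c. \<forall>x\<in>X. m \<le> f x"
  then obtain m where "c < m" "\<forall>x\<in>X. m \<le> f x" by blast
  then have "ereal c < ereal m" by simp
  also have "\<dots> \<le> (INF x\<in>X. ereal (f x))"
    using \<open>\<forall>x\<in>X. m \<le> f x\<close> by (simp add: INF_greatest)
  finally show "ereal c < (INF x\<in>X. ereal (f x))" .
qed

lemma ex_scaled_gap_ge_one_iff:
  fixes f :: "'a \<Rightarrow> real"
  shows "(\<exists>d. \<forall>x\<in>X. 1 \<le> d * (f x - c))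
     \<longleftrightarrow> (\<exists>m>c. \<forall>x\<in>X. m \<le> f x) \<or> (\<exists>m<c. \<forall>x\<in>X. f x \<le> m)"
proof
  assume "\<exists>d. \<forall>x\<in>X. 1 \<le> d * (f x - c)"
  then obtain d where d: "\<forall>x\<in>X. 1 \<le> d * (f x - c)" by blast
  consider "d > 0" | "d < 0" | "d = 0" by linarith
  then show "(\<exists>m>c. \<forall>x\<in>X. m \<le> f x) \<or> (\<exists>m<c. \<forall>x\<in>X. f x \<le> m)"
  proof cases
    case 1
    with d have "\<forall>x\<in>X. c + 1 / d \<le> f x" by (auto simp: field_simps)
    with 1 show ?thesis by (intro disjI1 exI[of _ "c + 1 / d"]) simp
  next
    case 2
    with d have "\<forall>x\<in>X. f x \<le> c + 1 / d" by (auto simp: field_simps)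
    with 2 show ?thesis by (intro disjI2 exI[of _ "c + 1 / d"]) simp
  next
    case 3
    with d have "X = {}" by auto
    then show ?thesis by (intro disjI1 exI[of _ "c + 1"]) simp
  qed
next
  assume "(\<exists>m>c. \<forall>x\<in>X. m \<le> f x) \<or> (\<exists>m<c. \<forall>x\<in>X. f x \<le> m)"
  then show "\<exists>d. \<forall>x\<in>X. 1 \<le> d * (f x - c)"
  proof
    assume "\<exists>m>c. \<forall>x\<in>X. m \<le> f x"
    then obtain m where "c < m" "\<forall>x\<in>X. m \<le> f x" by blast
    then have "\<forall>x\<in>X. 1 \<le> (1 / (m - c)) * (f x - c)" by (simp add: field_simps)
    then show ?thesis ..
  next
    assume "\<exists>m<c. \<forall>x\<in>X. f x \<le> m"
    then obtain m where "m < c" "\<forall>x\<in>X. f x \<le> m" by blast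
    then have "\<forall>x\<in>X. 1 \<le> (1 / (m - c)) * (f x - c)" by (simp add: field_simps)
    then show ?thesis ..
  qed
qed

lemma line_fst_below_iff_snd_above:
  fixes S :: "(real \<times> real) set"
  assumes line: "\<forall>(a, b) \<in> S. a + b = L"
  shows "(\<exists>m<c. \<forall>p\<in>S. fst p \<le> m) \<longleftrightarrow> (\<exists>m>L - c. \<forall>p\<in>S. m \<le> snd p)"
proof
  assume "\<exists>m<c. \<forall>p\<in>S. fst p \<le> m"
  then obtain m where "m < c" "\<forall>p\<in>S. fst p \<le> m" by blast
  with line have "\<forall>p\<in>S. L - m \<le> snd p" by fastforce
  with \<open>m < c\<close> show "\<exists>m>L - c. \<forall>p\<in>S. m \<le> snd p"
    by (intro exI[of _ "L - m"]) simp
next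
  assume "\<exists>m>L - c. \<forall>p\<in>S. m \<le> snd p"
  then obtain m where "L - c < m" "\<forall>p\<in>S. m \<le> snd p" by blast
  with line have "\<forall>p\<in>S. fst p \<le> L - m" by fastforce
  with \<open>L - c < m\<close> show "\<exists>m<c. \<forall>p\<in>S. fst p \<le> m"
    by (intro exI[of _ "L - m"]) simp
qed

lemma line_separable_iff_scaled_gap:
  fixes A B L :: real and S :: "(real \<times> real) set"
  assumes A: "A > 0" and B: "B > 0" and L: "L \<ge> 0"
    and line: "\<forall>(a, b) \<in> S. a + b = L"
  shows "(\<exists>lam1 lam2. (\<forall>(a, b) \<in> S. a * lam1 + b * lam2 \<ge> 1) \<and> lam1 * A + lam2 * B < 0)
     \<longleftrightarrow> (\<exists>d. \<forall>(a, b) \<in> S. 1 \<le> d * (a - A * L / (A + B)))"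
proof
  assume "\<exists>lam1 lam2. (\<forall>(a, b) \<in> S. a * lam1 + b * lam2 \<ge> 1) \<and> lam1 * A + lam2 * B < 0"
  then obtain lam1 lam2 where sep: "\<forall>(a, b) \<in> S. a * lam1 + b * lam2 \<ge> 1"
    and neg: "lam1 * A + lam2 * B < 0" by blast
  define d where "d = lam1 - lam2"
  have "lam2 \<le> - d * A / (A + B)"
    using neg A B unfolding d_def by (simp add: field_simps)
  then have "L * lam2 \<le> L * (- d * A / (A + B))"
    using L by (rule mult_left_mono)
  then have L_lam2_le: "L * lam2 \<le> - d * (A * L / (A + B))"
    by (simp add: algebra_simps)
  have "1 \<le> d * (a - A * L / (A + B))" if "(a, b) \<in> S" for a b
  proof -
    have "1 \<le> a * lam1 + b * lam2" using sep that by auto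
    also have "\<dots> = d * a + L * lam2"
      using line that unfolding d_def by (auto simp: algebra_simps)
    also have "\<dots> \<le> d * (a - A * L / (A + B))"
      using L_lam2_le by (simp add: algebra_simps)
    finally show ?thesis .
  qed
  then show "\<exists>d. \<forall>(a, b) \<in> S. 1 \<le> d * (a - A * L / (A + B))" by blast
next
  assume "\<exists>d. \<forall>(a, b) \<in> S. 1 \<le> d * (a - A * L / (A + B))"
  then obtain d where gap: "\<forall>(a, b) \<in> S. 1 \<le> d * (a - A * L / (A + B))" by blast
  \<comment> \<open>Taking \<open>\<lambda>\<^sub>2\<close> one unit below its bound \<open>-e A / (A + B)\<close> gives
    \<open>a \<lambda>\<^sub>1 + b \<lambda>\<^sub>2 = e (a - c) - L\<close>; the factor \<open>1 + L\<close> in \<open>e\<close> pays for the \<open>- L\<close>.\<close>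
  define c where "c = A * L / (A + B)"
  define e where "e = (1 + L) * d"
  define lam2 where "lam2 = - e * A / (A + B) - 1"
  define lam1 where "lam1 = lam2 + e"
  have L_lam2: "L * lam2 = - e * c - L"
    unfolding lam2_def c_def by (simp add: algebra_simps)
  have "1 \<le> a * lam1 + b * lam2" if "(a, b) \<in> S" for a b
  proof -
    have b: "b = L - a" using line that by auto
    have "1 + L \<le> (1 + L) * (d * (a - c))"
      using gap that L unfolding c_def by (auto intro: mult_left_mono[of 1, simplified])
    also have "\<dots> = e * a + L * lam2 + L"
      unfolding L_lam2 e_def by (simp add: algebra_simps)
    also have "\<dots> = a * lam1 + b * lam2 + L"
      unfolding b lam1_def by (simp add: algebra_simps)
    finally show ?thesis by simp
  qed
  moreover have "lam1 * A + lam2 * B = - (A + B)"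
  proof -
    have "lam2 * (A + B) = - e * A - (A + B)"
      using A B unfolding lam2_def by (simp add: field_simps)
    then show ?thesis unfolding lam1_def by (simp add: algebra_simps)
  qed
  ultimately show "\<exists>lam1 lam2. (\<forall>(a, b) \<in> S. a * lam1 + b * lam2 \<ge> 1) \<and> lam1 * A + lam2 * B < 0"
    using A B by (intro exI[of _ lam1] exI[of _ lam2]) auto
qed

theorem lemma4p9:
  fixes A B l :: nat and S :: "(real \<times> real) set"
  assumes "A > 0" and "B > 0" and "l > 0"
    and "\<forall>(a, b) \<in> S. a + b = real l - 1"
  shows "(\<exists>lam1 lam2 :: real. (\<forall>(a, b) \<in> S. a * lam1 + b * lam2 \<ge> 1)
            \<and> lam1 * real A + lam2 * real B < 0)
     \<longleftrightarrow> ((INF p\<in>S. ereal (fst p)) > ereal (real A * (real l - 1) / (real A + real B))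
          \<or> (INF p\<in>S. ereal (snd p)) > ereal (real B * (real l - 1) / (real A + real B)))"
proof -
  define L where "L = real l - 1"
  define c where "c = real A * L / (real A + real B)"
  have L: "L \<ge> 0" using \<open>l > 0\<close> unfolding L_def by simp
  have line: "\<forall>(a, b) \<in> S. a + b = L" using assms(4) unfolding L_def .
  have c': "real B * L / (real A + real B) = L - c"
    using assms(1,2) unfolding c_def by (simp add: field_simps)
  have sep_iff: "(\<exists>lam1 lam2 :: real. (\<forall>(a, b) \<in> S. a * lam1 + b * lam2 \<ge> 1)
            \<and> lam1 * real A + lam2 * real B < 0)
      \<longleftrightarrow> (\<exists>d. \<forall>p\<in>S. 1 \<le> d * (fst p - c))"
    using line_separable_iff_scaled_gap[of "real A" "real B" L S] assms(1,2) L line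
    by (simp add: c_def case_prod_beta)
  show ?thesis
    unfolding L_def[symmetric] c_def[symmetric] c' sep_iff ex_scaled_gap_ge_one_iff
      line_fst_below_iff_snd_above[OF line] ereal_less_INF_iff by (rule refl)
qed

end
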